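(* Assume the standing setting below with $I\ge 2$ and fix arbitrary parameters $0<\beta\le 1$, $\lambda\ge 1$, $0<\mu\le 1$. (i) (High reference point $R_p=0$.) The supremum of $U(b,\cdot)$ over $[0,\infty)$ is attained, and it is attained at some point of the finite set $\{d_i-Q:\ i=\hat\imath+1,\ldots,I\}\cup\{0\}$; i.e. an optimal buying quantity is $$q_b^*=\arg\max_{q_b\in\{d_i-Q,\ i=\hat\imath+1,\ldots,I\}\cup\{0\}} U(b,q_b).$$ (ii) (Low reference point $R_p=\kappa(Q-d_I)$.) Let $\mathcal X_b$ be the set of points $q_b>0$ at which $U(b,\cdot)$ (computed with $R_p=\kappa(Q-d_I)$) is differentiable with $\partial U(b,q_b)/\partial q_b=0$. Then the supremum of $U(b,\cdot)$ over $[0,\infty)$ is attained at some point of $\{d_i-Q:\ i=\hat\imath+1,\ldots,I\}\cup\mathcal X_b\cup\{0\}$; i.e. $$q_b^*=\arg\max_{q_b\in\{d_i-Q,\ i=\hat\imath+1,\ldots,I\}\cup\mathcal X_b\cup\{0\}} U(b,q_b).$$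
   Context: Standing setting. Let $\kappa>0$ and $Q>0$. The future demand $d$ takes values $d_1<d_2<\cdots<d_I$ ($I\ge2$) with $\mathbb P(d=d_i)=p_i>0$, $\sum_i p_i=1$, and $d_1<Q<d_I$; let $\hat\imath$ be the index with $d_{\hat\imath}<Q\le d_{\hat\imath+1}$. The satisfaction loss is $L(y)=0$ if $y\ge0$ and $L(y)=\kappa y$ if $y<0$. For parameters $0<\beta\le1$, $\lambda\ge1$, the value function is $v(x)=x^\beta$ for $x\ge0$ and $v(x)=-\lambda(-x)^\beta$ for $x<0$. For $0<\mu\le1$ the probability weighting is $w(p)=\exp(-(-\ln p)^\mu)$ for $p\in(0,1]$. Prices satisfy $0<\pi_s^{\min}<\kappa$ and $0<\pi_b^{\max}<\kappa$. For a reference point $R_p\in\mathbb R$, the buyer's utility of buying $q_b\ge0$ is $U(b,q_b)=\sum_{i=1}^I w(p_i)\,v\big(-\pi_s^{\min}q_b+L(Q+q_b-d_i)-R_p\big)$ and the seller's utility of selling $q_s\ge0$ is $U(s,q_s)=\sum_{i=1}^I w(p_i)\,v\big(\pi_b^{\max}q_s+L(Q-q_s-d_i)-R_p\big)$. *)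

theory Defs
  imports Complex_Main
begin

definition sat_loss :: "real \<Rightarrow> real \<Rightarrow> real" where
  "sat_loss kappa y = (if y \<ge> 0 then 0 else kappa * y)"

definition pt_value :: "real \<Rightarrow> real \<Rightarrow> real \<Rightarrow> real" where
  "pt_value beta lam x = (if x \<ge> 0 then x powr beta else - lam * ((- x) powr beta))"

definition prob_weight :: "real \<Rightarrow> real \<Rightarrow> real" where
  "prob_weight mu p = exp (- ((- ln p) powr mu))"

definition buyer_utility ::
  "real \<Rightarrow> real \<Rightarrow> real \<Rightarrow> real \<Rightarrow> real \<Rightarrow> nat \<Rightarrow> (nat \<Rightarrow> real) \<Rightarrow> (nat \<Rightarrow> real)
   \<Rightarrow> real \<Rightarrow> real \<Rightarrow> real \<Rightarrow> real" where
  "buyer_utility kappa beta lam mu Q I d p pi_s_min Rp qb =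
     (\<Sum>i=1..I. prob_weight mu (p i) *
        pt_value beta lam (- pi_s_min * qb + sat_loss kappa (Q + qb - d i) - Rp))"

end

theory Submission
  imports Defs "HOL-Analysis.Analysis"
begin

text \<open>
  Buying beyond the largest demand only costs money, so the supremum over \<open>q \<ge> 0\<close> is
  attained on \<open>[0, d\<^sub>I - Q]\<close>. Between two consecutive kinks \<open>d\<^sub>i - Q\<close> every outcome
  \<open>-\<pi> q + L(Q + q - d\<^sub>i) - R\<^sub>p\<close> is affine in \<open>q\<close>. For \<open>R\<^sub>p = 0\<close> all outcomes are losses,
  where \<open>v\<close> is convex, so \<open>U\<close> is convex on each such interval and is maximised at a kink.
  For \<open>R\<^sub>p = \<kappa>(Q - d\<^sub>I)\<close> all outcomes strictly between the kinks are gains, where \<open>v\<close> is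
  smooth, so an interior maximiser is a critical point.
\<close>

lemma pt_value_nonpos: "x \<le> 0 \<Longrightarrow> 0 < beta \<Longrightarrow> pt_value beta lam x = - lam * (- x) powr beta"
  by (cases "x = 0") (auto simp: pt_value_def)

lemma pt_value_eq_powr_parts:
  "0 < beta \<Longrightarrow> pt_value beta lam x = max x 0 powr beta - lam * max (- x) 0 powr beta"
  by (auto simp: pt_value_def max_def)

lemma continuous_on_pt_value:
  assumes "0 < beta"
  shows "continuous_on UNIV (pt_value beta lam)"
proof -
  have "continuous_on UNIV (\<lambda>x. max x 0 powr beta - lam * max (- x) 0 powr beta)"
    using assms by (intro continuous_intros continuous_on_powr') auto
  then show ?thesis
    using assms by (simp add: pt_value_eq_powr_parts)
qed

lemma pt_value_mono:
  assumes "0 < beta" "0 \<le> lam" "x \<le> y"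
  shows "pt_value beta lam x \<le> pt_value beta lam y"
proof -
  have "max x 0 powr beta \<le> max y 0 powr beta" "max (- y) 0 powr beta \<le> max (- x) 0 powr beta"
    using assms by (auto intro: powr_mono2)
  then show ?thesis
    using assms by (simp add: pt_value_eq_powr_parts mult_left_mono diff_mono)
qed

lemma pt_value_differentiable:
  assumes "x \<noteq> 0"
  shows "pt_value beta lam differentiable at x"
proof (cases "0 < x")
  case True
  have "(\<lambda>y. y powr beta) differentiable at x"
    using True by (auto simp: real_differentiable_def intro!: has_real_derivative_powr)
  then show ?thesis
    using True
    by (rule differentiable_transform_within[where d = x]) (auto simp: pt_value_def dist_real_def)
next
  case False
  then have "0 < - x" using assms by simp
  have "(\<lambda>y. - lam * (- y) powr beta) differentiable at x"
    using \<open>0 < - x\<close> by (auto simp: real_differentiable_def intro!: derivative_eq_intros)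
  then show ?thesis
    using \<open>0 < - x\<close>
    by (rule differentiable_transform_within[where d = "- x"]) (auto simp: pt_value_def dist_real_def)
qed

lemma concave_on_powr:
  fixes beta :: real
  assumes "0 < beta" "beta \<le> 1"
  shows "concave_on {0..} (\<lambda>x. x powr beta)"
proof (rule concave_on_linorderI)
  have concave_pos: "concave_on {0<..} (\<lambda>x::real. x powr beta)"
  proof (rule f''_le0_imp_concave[where f' = "\<lambda>x. beta * x powr (beta - 1)"
        and f'' = "\<lambda>x. beta * ((beta - 1) * x powr (beta - 1 - 1))"])
    fix x :: real
    assume "x \<in> {0<..}"
    then show "DERIV (\<lambda>x. x powr beta) x :> beta * x powr (beta - 1)"
      and "DERIV (\<lambda>x. beta * x powr (beta - 1)) x :> beta * ((beta - 1) * x powr (beta - 1 - 1))"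
      by (intro DERIV_cmult has_real_derivative_powr; simp)+
    show "beta * ((beta - 1) * x powr (beta - 1 - 1)) \<le> 0"
      using assms by (intro mult_nonneg_nonpos mult_nonpos_nonneg) auto
  qed simp
  fix t x y :: real
  assume t: "0 < t" "t < 1" and xy: "x \<in> {0..}" "y \<in> {0..}" "x < y"
  show "(1 - t) * x powr beta + t * y powr beta \<le> ((1 - t) *\<^sub>R x + t *\<^sub>R y) powr beta"
  proof (cases "x = 0")
    case True
    have "t * y powr beta \<le> t powr beta * y powr beta"
      using powr_mono'[of beta 1 t] t assms by (intro mult_right_mono) auto
    also have "\<dots> = (t * y) powr beta"
      by (simp add: powr_mult)
    finally show ?thesis
      using True assms by simp
  next
    case False
    then show ?thesis
      using concave_onD[OF concave_pos, of t x y] t xy by simp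
  qed
qed simp

lemma convex_on_pt_value_affine:
  assumes "0 < beta" "beta \<le> 1" "0 \<le> lam" "\<And>q. q \<in> {a..c} \<Longrightarrow> alpha + s * q \<le> 0"
  shows "convex_on {a..c} (\<lambda>q. pt_value beta lam (alpha + s * q))"
proof (rule convex_onI)
  fix t x y :: real
  assume t: "0 < t" "t < 1" and xy: "x \<in> {a..c}" "y \<in> {a..c}"
  define X Y where "X = - (alpha + s * x)" and "Y = - (alpha + s * y)"
  have z: "(1 - t) *\<^sub>R x + t *\<^sub>R y \<in> {a..c}"
    using convexD_alt[OF convex_real_interval(5) xy, of t] t by simp
  have "X \<ge> 0" "Y \<ge> 0"
    using assms(4)[OF xy(1)] assms(4)[OF xy(2)] by (auto simp: X_def Y_def)
  then have "(1 - t) * X powr beta + t * Y powr beta \<le> ((1 - t) * X + t * Y) powr beta"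
    using concave_onD[OF concave_on_powr[OF assms(1,2)], of t X Y] t by simp
  then have mono: "lam * ((1 - t) * X powr beta + t * Y powr beta) \<le> lam * ((1 - t) * X + t * Y) powr beta"
    using assms(3) by (rule mult_left_mono)
  have combination: "alpha + s * ((1 - t) *\<^sub>R x + t *\<^sub>R y) = - ((1 - t) * X + t * Y)"
    by (simp add: X_def Y_def algebra_simps)
  have "pt_value beta lam (alpha + s * ((1 - t) *\<^sub>R x + t *\<^sub>R y))
      = - lam * ((1 - t) * X + t * Y) powr beta"
    using pt_value_nonpos[OF assms(4)[OF z] assms(1), of lam]
    unfolding combination by (simp only: minus_minus)
  moreover have "pt_value beta lam (alpha + s * x) = - lam * X powr beta"
    "pt_value beta lam (alpha + s * y) = - lam * Y powr beta"
    using pt_value_nonpos[OF assms(4) assms(1)] xy by (auto simp: X_def Y_def)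
  ultimately show "pt_value beta lam (alpha + s * ((1 - t) *\<^sub>R x + t *\<^sub>R y))
      \<le> (1 - t) * pt_value beta lam (alpha + s * x) + t * pt_value beta lam (alpha + s * y)"
    using mono by (simp add: algebra_simps)
qed simp

lemma convex_on_cong:
  assumes "\<And>x. x \<in> S \<Longrightarrow> f x = g x"
  shows "convex_on S f = convex_on S g"
  using assms by (auto simp: convex_on_def convex_def)

lemma convex_on_sum_fun:
  assumes "finite I" "convex A" "\<And>i. i \<in> I \<Longrightarrow> convex_on A (f i)"
  shows "convex_on A (\<lambda>x. \<Sum>i\<in>I. f i x)"
  using assms by (induction I rule: finite_induct) (auto simp: convex_on_const)

lemma sat_loss_eq_min: "sat_loss kappa y = kappa * min y 0"
  by (auto simp: sat_loss_def min_def)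

lemma sat_loss_nonpos: "0 \<le> kappa \<Longrightarrow> sat_loss kappa y \<le> 0"
  by (simp add: sat_loss_def mult_nonneg_nonpos)

lemma sat_loss_ge: "0 \<le> kappa \<Longrightarrow> z \<le> 0 \<Longrightarrow> z \<le> y \<Longrightarrow> kappa * z \<le> sat_loss kappa y"
  by (simp add: sat_loss_eq_min mult_left_mono)

lemma sat_loss_differentiable:
  assumes "y \<noteq> 0"
  shows "sat_loss kappa differentiable at y"
proof (cases "0 < y")
  case True
  have "(\<lambda>_. 0) differentiable at y"
    by simp
  then show ?thesis
    using True
    by (rule differentiable_transform_within[where d = y]) (auto simp: sat_loss_def dist_real_def)
next
  case False
  then have "0 < - y"
    using assms by simp
  have "(\<lambda>x. kappa * x) differentiable at y"
    by simp
  then show ?thesis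
    using \<open>0 < - y\<close>
    by (rule differentiable_transform_within[where d = "- y"]) (auto simp: sat_loss_def dist_real_def)
qed

lemma prob_weight_pos: "0 < prob_weight mu p"
  by (simp add: prob_weight_def)

lemma continuous_on_buyer_utility:
  assumes "0 < beta"
  shows "continuous_on UNIV (buyer_utility kappa beta lam mu Q I d p pis R)"
proof -
  have "continuous_on UNIV (\<lambda>q. sat_loss kappa (Q + q - d i))" for i
    unfolding sat_loss_eq_min by (intro continuous_intros)
  then show ?thesis
    unfolding buyer_utility_def
    by (intro continuous_intros continuous_on_compose2[OF continuous_on_pt_value[OF assms]]) auto
qed

lemma buyer_utility_antimono:
  assumes "\<And>i. i \<in> {1..I} \<Longrightarrow> d i \<le> Q + q" "q \<le> q'"
    and "0 \<le> pis" "0 < beta" "0 \<le> lam"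
  shows "buyer_utility kappa beta lam mu Q I d p pis R q'
    \<le> buyer_utility kappa beta lam mu Q I d p pis R q"
  unfolding buyer_utility_def
proof (rule sum_mono)
  fix i assume i: "i \<in> {1..I}"
  have "pt_value beta lam (- pis * q' + sat_loss kappa (Q + q' - d i) - R)
      \<le> pt_value beta lam (- pis * q + sat_loss kappa (Q + q - d i) - R)"
    using assms(1)[OF i] assms(2-5)
    by (intro pt_value_mono) (auto simp: sat_loss_def intro: mult_left_mono)
  then show "prob_weight mu (p i) * pt_value beta lam (- pis * q' + sat_loss kappa (Q + q' - d i) - R)
      \<le> prob_weight mu (p i) * pt_value beta lam (- pis * q + sat_loss kappa (Q + q - d i) - R)"
    using prob_weight_pos[of mu "p i"] by (intro mult_left_mono) auto
qed

lemma buyer_utility_differentiable: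
  assumes "\<And>i. i \<in> {1..I} \<Longrightarrow> Q + q \<noteq> d i"
    and "\<And>i. i \<in> {1..I} \<Longrightarrow> - pis * q + sat_loss kappa (Q + q - d i) - R \<noteq> 0"
  shows "buyer_utility kappa beta lam mu Q I d p pis R differentiable at q"
  unfolding buyer_utility_def
  using assms
  by (auto intro!: derivative_intros differentiable_compose[OF pt_value_differentiable]
      differentiable_compose[OF sat_loss_differentiable])

lemma buyer_utility_convex_on:
  assumes "0 \<le> a" "0 \<le> kappa" "0 \<le> pis" "0 \<le> R" "0 < beta" "beta \<le> 1" "0 \<le> lam"
    and no_kink: "\<And>i. i \<in> {1..I} \<Longrightarrow> d i - Q \<notin> {a<..<c}"
  shows "convex_on {a..c} (buyer_utility kappa beta lam mu Q I d p pis R)"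
proof -
  define s where "s i = (if d i - Q \<le> a then 0 else kappa)" for i
  define G where "G q = (\<Sum>i=1..I. prob_weight mu (p i) * pt_value beta lam ((s i * (Q - d i) - R) + (s i - pis) * q))"
    for q
  have loss: "sat_loss kappa (Q + q - d i) = s i * (Q + q - d i)" if "i \<in> {1..I}" "q \<in> {a..c}" for i q
    using no_kink[OF that(1)] that(2) by (auto simp: s_def sat_loss_def)
  have affine: "- pis * q + sat_loss kappa (Q + q - d i) - R = (s i * (Q - d i) - R) + (s i - pis) * q"
    if "i \<in> {1..I}" "q \<in> {a..c}" for i q
    using loss[OF that] by (simp add: algebra_simps)
  have "convex_on {a..c} (\<lambda>q. prob_weight mu (p i) * pt_value beta lam ((s i * (Q - d i) - R) + (s i - pis) * q))"
    if i: "i \<in> {1..I}" for i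
  proof (intro convex_on_cmul convex_on_pt_value_affine)
    fix q assume q: "q \<in> {a..c}"
    have "0 \<le> pis * q"
      using assms(1,3) q by simp
    then show "s i * (Q - d i) - R + (s i - pis) * q \<le> 0"
      using affine[OF i q] sat_loss_nonpos[OF assms(2), of "Q + q - d i"] assms(4) by simp
  qed (use assms prob_weight_pos[of mu "p i"] in auto)
  then have "convex_on {a..c} G"
    unfolding G_def by (intro convex_on_sum_fun) auto
  moreover have "buyer_utility kappa beta lam mu Q I d p pis R q = G q" if q: "q \<in> {a..c}" for q
    unfolding buyer_utility_def G_def by (rule sum.cong[OF refl]) (simp only: affine[OF _ q])
  ultimately show ?thesis
    using convex_on_cong[of "{a..c}" "buyer_utility kappa beta lam mu Q I d p pis R" G] by blast
qed

lemma finite_gap_around: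
  fixes B :: "'a::linorder set"
  assumes "finite B" "x \<in> B" "y \<in> B" "x \<le> m" "m \<le> y" "m \<notin> B"
  shows "\<exists>a\<in>B. \<exists>c\<in>B. a < m \<and> m < c \<and> {a<..<c} \<inter> B = {}"
proof -
  let ?L = "{b\<in>B. b < m}" and ?H = "{b\<in>B. m < b}"
  have "x \<in> ?L" "y \<in> ?H"
    using assms by (auto simp: order.order_iff_strict)
  then have L: "Max ?L \<in> ?L" and H: "Min ?H \<in> ?H"
    using assms(1) by (intro Max_in Min_in; auto)+
  have "b \<le> Max ?L \<or> Min ?H \<le> b" if "b \<in> B" for b
    using that assms(1,6) by (cases b m rule: linorder_cases) auto
  then have "{Max ?L<..<Min ?H} \<inter> B = {}"
    by fastforce
  with L H show ?thesis
    by blast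
qed

lemma continuous_attains_sup_atLeast:
  fixes f :: "real \<Rightarrow> real"
  assumes "continuous_on {a..b} f" "a \<le> b" "\<And>q. b \<le> q \<Longrightarrow> f q \<le> f b"
  shows "\<exists>m\<in>{a..b}. \<forall>q\<ge>a. f q \<le> f m"
proof -
  obtain m where m: "m \<in> {a..b}" "\<And>y. y \<in> {a..b} \<Longrightarrow> f y \<le> f m"
    using continuous_attains_sup[OF compact_Icc _ assms(1)] assms(2) by auto
  have "f q \<le> f m" if "a \<le> q" for q
  proof (cases "q \<le> b")
    case True
    then show ?thesis using m that by auto
  next
    case False
    then have "f q \<le> f b" using assms(3) by auto
    also have "\<dots> \<le> f m" using m assms(2) by auto
    finally show ?thesis .
  qed
  with m(1) show ?thesis
    by blast
qed

text \<open>
  \<open>B\<close> collects \<open>0\<close> and the kinks \<open>d\<^sub>i - Q\<close> of the buyer's utility that lie in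
  \<open>[0, D]\<close>; in the application \<open>D = d\<^sub>I - Q\<close> is the largest kink.
\<close>

locale buyer_kinks =
  fixes kappa beta lam mu pis Q :: real and I :: nat and d p :: "nat \<Rightarrow> real"
    and B :: "real set" and D :: real
  assumes kappa_nonneg: "0 \<le> kappa" and pis_nonneg: "0 \<le> pis"
    and beta: "0 < beta" "beta \<le> 1" and lam_nonneg: "0 \<le> lam"
    and finite_B: "finite B" and zero_in_B: "0 \<in> B" and D_in_B: "D \<in> B"
    and B_subset: "B \<subseteq> {0..D}"
    and kinks: "\<And>i. i \<in> {1..I} \<Longrightarrow> d i - Q \<in> B \<or> d i - Q \<le> 0"
begin

abbreviation U :: "real \<Rightarrow> real \<Rightarrow> real" where
  "U R \<equiv> buyer_utility kappa beta lam mu Q I d p pis R"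

lemma kink_le_D: "i \<in> {1..I} \<Longrightarrow> d i - Q \<le> D"
  using kinks[of i] B_subset D_in_B by auto

lemma max_exists: "\<exists>m\<in>{0..D}. \<forall>q\<ge>0. U R q \<le> U R m"
proof (rule continuous_attains_sup_atLeast)
  show "continuous_on {0..D} (U R)"
    using continuous_on_buyer_utility[OF beta(1)] continuous_on_subset by blast
  show "0 \<le> D"
    using D_in_B B_subset by auto
  show "U R q \<le> U R D" if "D \<le> q" for q
    using that kink_le_D pis_nonneg beta lam_nonneg
    by (intro buyer_utility_antimono) (auto simp: algebra_simps)
qed

lemma max_at_kink:
  assumes "0 \<le> R"
  shows "\<exists>q\<in>B. \<forall>qb\<ge>0. U R qb \<le> U R q"
proof -
  obtain m where m: "m \<in> {0..D}" "\<And>q. 0 \<le> q \<Longrightarrow> U R q \<le> U R m"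
    using max_exists by blast
  show ?thesis
  proof (cases "m \<in> B")
    case True
    with m show ?thesis by blast
  next
    case False
    then obtain a c where ac: "a \<in> B" "c \<in> B" "a < m" "m < c" "{a<..<c} \<inter> B = {}"
      using finite_gap_around[OF finite_B zero_in_B D_in_B _ _ False] m(1) by auto
    have "0 \<le> a"
      using ac(1) B_subset by auto
    have "d i - Q \<notin> {a<..<c}" if "i \<in> {1..I}" for i
      using kinks[OF that] ac(5) \<open>0 \<le> a\<close> by auto
    then have "convex_on {a..c} (U R)"
      using \<open>0 \<le> a\<close> kappa_nonneg pis_nonneg assms beta lam_nonneg
      by (intro buyer_utility_convex_on) auto
    then have "U R m \<le> max (U R a) (U R c)"
      using ac(3,4) by (intro convex_on_le_max) auto
    then obtain e where "e \<in> B" "U R m \<le> U R e"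
      using ac(1,2) by (auto simp: max_def split: if_splits)
    with m(2) show ?thesis
      by (meson order_trans)
  qed
qed

lemma max_at_kink_or_critical:
  assumes "pis < kappa" "R \<le> - kappa * D"
  shows "\<exists>q\<in>B \<union> {q. 0 < q \<and> (U R has_real_derivative 0) (at q)}. \<forall>qb\<ge>0. U R qb \<le> U R q"
proof -
  obtain m where m: "m \<in> {0..D}" "\<And>q. 0 \<le> q \<Longrightarrow> U R q \<le> U R m"
    using max_exists by blast
  show ?thesis
  proof (cases "m \<in> B")
    case True
    with m show ?thesis by blast
  next
    case False
    then have "0 < m"
      using m(1) zero_in_B by (cases "m = 0") auto
    have no_kink: "Q + m \<noteq> d i" if "i \<in> {1..I}" for i
    proof
      assume "Q + m = d i"
      then have "d i - Q = m" by simp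
      with kinks[OF that] False \<open>0 < m\<close> show False by auto
    qed
    have gain: "- pis * m + sat_loss kappa (Q + m - d i) - R \<noteq> 0" if "i \<in> {1..I}" for i
    proof -
      have "kappa * (m - D) \<le> sat_loss kappa (Q + m - d i)"
        using kink_le_D[OF that] m(1) kappa_nonneg by (intro sat_loss_ge) auto
      moreover have "pis * m < kappa * m"
        using assms(1) \<open>0 < m\<close> by simp
      ultimately show ?thesis
        using assms(2) by (simp add: algebra_simps)
    qed
    have "U R differentiable at m"
      by (rule buyer_utility_differentiable) (use no_kink gain in auto)
    then obtain l where l: "(U R has_real_derivative l) (at m)"
      by (auto simp: real_differentiable_def)
    have "l = 0"
      using m(2) \<open>0 < m\<close> by (intro DERIV_local_max[OF l \<open>0 < m\<close>]) auto
    with l \<open>0 < m\<close> m(2) show ?thesis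
      by blast
  qed
qed

end

theorem theorem1:
  fixes kappa Q beta lam mu pi_s_min pi_b_max :: real
    and I ihat :: nat
    and d p :: "nat \<Rightarrow> real"
  assumes kappa_pos: "kappa > 0"
    and Q_pos: "Q > 0"
    and I_ge: "I \<ge> 2"
    and d_strict: "\<And>i j. 1 \<le> i \<Longrightarrow> i < j \<Longrightarrow> j \<le> I \<Longrightarrow> d i < d j"
    and p_pos: "\<And>i. 1 \<le> i \<Longrightarrow> i \<le> I \<Longrightarrow> p i > 0"
    and p_sum: "(\<Sum>i=1..I. p i) = 1"
    and Q_range: "d 1 < Q" "Q < d I"
    and ihat_range: "1 \<le> ihat" "ihat < I"
    and ihat_def: "d ihat < Q" "Q \<le> d (ihat + 1)"
    and beta: "0 < beta" "beta \<le> 1"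
    and lam: "lam \<ge> 1"
    and mu: "0 < mu" "mu \<le> 1"
    and pis: "0 < pi_s_min" "pi_s_min < kappa"
    and pib: "0 < pi_b_max" "pi_b_max < kappa"
  shows
    "(let U = buyer_utility kappa beta lam mu Q I d p pi_s_min 0 in
       \<exists>qstar \<in> {d i - Q | i. ihat + 1 \<le> i \<and> i \<le> I} \<union> {0}.
          qstar \<ge> 0 \<and> (\<forall>qb \<ge> 0. U qb \<le> U qstar))
     \<and>
     (let U = buyer_utility kappa beta lam mu Q I d p pi_s_min (kappa * (Q - d I));
          Xb = {qb. qb > 0 \<and> (U has_real_derivative 0) (at qb)} in
       \<exists>qstar \<in> {d i - Q | i. ihat + 1 \<le> i \<and> i \<le> I} \<union> Xb \<union> {0}.
          qstar \<ge> 0 \<and> (\<forall>qb \<ge> 0. U qb \<le> U qstar))"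
proof -
  define B where "B = (\<lambda>i. d i - Q) ` {ihat + 1..I} \<union> {0}"
  have B_eq: "{d i - Q | i. ihat + 1 \<le> i \<and> i \<le> I} \<union> {0} = B"
    "{d i - Q | i. ihat + 1 \<le> i \<and> i \<le> I} \<union> X \<union> {0} = B \<union> X" for X
    by (auto simp: B_def)
  have d_mono: "d i \<le> d j" if "1 \<le> i" "i \<le> j" "j \<le> I" for i j
    using d_strict[of i j] that by (cases "i = j") auto
  interpret buyer_kinks kappa beta lam mu pi_s_min Q I d p B "d I - Q"
  proof
    show "B \<subseteq> {0..d I - Q}"
      using d_mono[of "ihat + 1"] d_mono[of _ I] ihat_def Q_range by (force simp: B_def)
    show "d i - Q \<in> B \<or> d i - Q \<le> 0" if "i \<in> {1..I}" for i
      using that d_mono[of i ihat] ihat_def ihat_range by (cases "i \<le> ihat") (auto simp: B_def)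
  qed (use kappa_pos pis beta lam ihat_range in \<open>auto simp: B_def\<close>)
  obtain q0 where q0: "q0 \<in> B" "\<forall>qb\<ge>0. U 0 qb \<le> U 0 q0"
    using max_at_kink[of 0] by auto
  obtain q1 where q1: "q1 \<in> B \<union> {q. 0 < q \<and> (U (kappa * (Q - d I)) has_real_derivative 0) (at q)}"
      "\<forall>qb\<ge>0. U (kappa * (Q - d I)) qb \<le> U (kappa * (Q - d I)) q1"
    using max_at_kink_or_critical[of "kappa * (Q - d I)"] pis by (auto simp: algebra_simps)
  have "0 \<le> q0" "0 \<le> q1"
    using q0(1) q1(1) B_subset by auto
  with q0 q1 show ?thesis
    unfolding Let_def B_eq by blast
qed

end
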